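(* Let $\mathcal C$ be a prenex class of sentences. Then: (i) 1-satisfiability of sentences in $\mathcal C$ is decidable in $G_V$ for every Gödel set $V$ if and only if classical satisfiability of sentences in $\mathcal C$ is decidable; (ii) for any two Gödel sets $V,V'$, a sentence in $\mathcal C$ is 1-satisfiable in $G_V$ if and only if it is 1-satisfiable in $G_{V'}$.
   Context: A Gödel set is a closed set $V\subseteq[0,1]$ with $0,1\in V$. A $V$-interpretation assigns to each $k$-ary predicate a function $U^k\to V$ on a nonempty domain $U$ (constants and function symbols as usual); $\bot\mapsto 0$, $\wedge,\vee$ are $\min,\max$, $\mathcal I(A\supset B)=1$ if $\mathcal I(A)\le\mathcal I(B)$ and $=\mathcal I(B)$ otherwise, $\forall,\exists$ are $\inf,\sup$ over $U$. A sentence is 1-satisfiable in $G_V$ if some $V$-interpretation gives it value $1$; classical satisfiability is two-valued satisfiability. A prenex sentence has the form $Q_1x_1\dots Q_nx_nB$ with $Q_i\in\{\forall,\exists\}$ and $B$ quantifier-free; a prenex class is the set of prenex sentences whose quantifier prefix belongs to a fixed set of prefixes (possibly with a fixed restriction on the signature, e.g. function-free). *)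

theory Defs
  imports Complex_Main
begin

text \<open>Terms: variables and function symbols (constants are 0-ary function symbols).
  A symbol is identified by its name together with the length of its argument list.\<close>
datatype trm = Var nat | Fn nat "trm list"

datatype fm =
    Bot
  | Atom nat "trm list"
  | And fm fm
  | Or fm fm
  | Imp fm fm
  | All nat fm
  | Ex nat fm

fun tvars :: "trm \<Rightarrow> nat set" where
  "tvars (Var n) = {n}"
| "tvars (Fn f ts) = (\<Union>t\<in>set ts. tvars t)"

fun fvars :: "fm \<Rightarrow> nat set" where
  "fvars Bot = {}"
| "fvars (Atom p ts) = (\<Union>t\<in>set ts. tvars t)"
| "fvars (And a b) = fvars a \<union> fvars b"
| "fvars (Or a b) = fvars a \<union> fvars b"
| "fvars (Imp a b) = fvars a \<union> fvars b"
| "fvars (All x a) = fvars a - {x}"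
| "fvars (Ex x a) = fvars a - {x}"

definition sentence :: "fm \<Rightarrow> bool" where
  "sentence \<phi> \<longleftrightarrow> fvars \<phi> = {}"

fun qfree :: "fm \<Rightarrow> bool" where
  "qfree (All x a) = False"
| "qfree (Ex x a) = False"
| "qfree (And a b) = (qfree a \<and> qfree b)"
| "qfree (Or a b) = (qfree a \<and> qfree b)"
| "qfree (Imp a b) = (qfree a \<and> qfree b)"
| "qfree _ = True"

fun prenex :: "fm \<Rightarrow> bool" where
  "prenex (All x a) = prenex a"
| "prenex (Ex x a) = prenex a"
| "prenex a = qfree a"

text \<open>Quantifier prefix: True stands for \<forall>, False for \<exists>.\<close>
fun qprefix :: "fm \<Rightarrow> bool list" where
  "qprefix (All x a) = True # qprefix a"
| "qprefix (Ex x a) = False # qprefix a"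
| "qprefix _ = []"

fun tfuns :: "trm \<Rightarrow> (nat \<times> nat) set" where
  "tfuns (Var n) = {}"
| "tfuns (Fn f ts) = insert (f, length ts) (\<Union>t\<in>set ts. tfuns t)"

fun ffuns :: "fm \<Rightarrow> (nat \<times> nat) set" where
  "ffuns Bot = {}"
| "ffuns (Atom p ts) = (\<Union>t\<in>set ts. tfuns t)"
| "ffuns (And a b) = ffuns a \<union> ffuns b"
| "ffuns (Or a b) = ffuns a \<union> ffuns b"
| "ffuns (Imp a b) = ffuns a \<union> ffuns b"
| "ffuns (All x a) = ffuns a"
| "ffuns (Ex x a) = ffuns a"

fun fpreds :: "fm \<Rightarrow> (nat \<times> nat) set" where
  "fpreds Bot = {}"
| "fpreds (Atom p ts) = {(p, length ts)}"
| "fpreds (And a b) = fpreds a \<union> fpreds b"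
| "fpreds (Or a b) = fpreds a \<union> fpreds b"
| "fpreds (Imp a b) = fpreds a \<union> fpreds b"
| "fpreds (All x a) = fpreds a"
| "fpreds (Ex x a) = fpreds a"

definition prenex_class :: "fm set \<Rightarrow> bool" where
  "prenex_class C \<longleftrightarrow>
     (\<exists>(Ps :: bool list set) (R :: (nat \<times> nat) set \<Rightarrow> (nat \<times> nat) set \<Rightarrow> bool).
        C = {\<phi>. sentence \<phi> \<and> prenex \<phi> \<and> qprefix \<phi> \<in> Ps \<and> R (ffuns \<phi>) (fpreds \<phi>)})"

definition goedel_set :: "real set \<Rightarrow> bool" where
  "goedel_set V \<longleftrightarrow> closed V \<and> V \<subseteq> {0..1} \<and> 0 \<in> V \<and> 1 \<in> V"

fun teval :: "(nat \<Rightarrow> 'u list \<Rightarrow> 'u) \<Rightarrow> (nat \<Rightarrow> 'u) \<Rightarrow> trm \<Rightarrow> 'u" where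
  "teval F e (Var n) = e n"
| "teval F e (Fn f ts) = F f (map (teval F e) ts)"

fun feval :: "'u set \<Rightarrow> (nat \<Rightarrow> 'u list \<Rightarrow> 'u) \<Rightarrow> (nat \<Rightarrow> 'u list \<Rightarrow> real)
              \<Rightarrow> (nat \<Rightarrow> 'u) \<Rightarrow> fm \<Rightarrow> real" where
  "feval U F P e Bot = 0"
| "feval U F P e (Atom p ts) = P p (map (teval F e) ts)"
| "feval U F P e (And a b) = min (feval U F P e a) (feval U F P e b)"
| "feval U F P e (Or a b) = max (feval U F P e a) (feval U F P e b)"
| "feval U F P e (Imp a b) =
     (if feval U F P e a \<le> feval U F P e b then 1 else feval U F P e b)"
| "feval U F P e (All x a) = Inf ((\<lambda>u. feval U F P (e(x := u)) a) ` U)"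
| "feval U F P e (Ex x a) = Sup ((\<lambda>u. feval U F P (e(x := u)) a) ` U)"

definition is_interp :: "real set \<Rightarrow> 'u set \<Rightarrow> (nat \<Rightarrow> 'u list \<Rightarrow> 'u)
                          \<Rightarrow> (nat \<Rightarrow> 'u list \<Rightarrow> real) \<Rightarrow> bool" where
  "is_interp V U F P \<longleftrightarrow> U \<noteq> {}
     \<and> (\<forall>f xs. set xs \<subseteq> U \<longrightarrow> F f xs \<in> U)
     \<and> (\<forall>p xs. set xs \<subseteq> U \<longrightarrow> P p xs \<in> V)"

definition one_sat :: "'u itself \<Rightarrow> real set \<Rightarrow> fm \<Rightarrow> bool" where
  "one_sat _ V \<phi> \<longleftrightarrow>
     (\<exists>(U :: 'u set) F P e. is_interp V U F P \<and> (\<forall>n. e n \<in> U) \<and> feval U F P e \<phi> = 1)"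

definition classical_sat :: "'u itself \<Rightarrow> fm \<Rightarrow> bool" where
  "classical_sat T \<phi> \<longleftrightarrow> one_sat T {0, 1} \<phi>"

end

theory Submission
  imports Defs
begin

text \<open>The map \<open>v \<mapsto> (if v > 0 then 1 else 0)\<close> on \<open>[0,1]\<close> commutes with \<open>0\<close>, \<open>min\<close>, \<open>max\<close> and
  Goedel implication, so replacing every predicate of a \<open>V\<close>-interpretation by the
  characteristic function of its support does the same to every quantifier-free formula.
  Through a quantifier prefix positivity is still propagated inwards: if \<open>\<forall>x A\<close> is positive
  then every instance is, and if \<open>\<exists>x A\<close> is positive then some instance is. Hence a prenex
  formula of positive value, in particular of value 1, is true in the crisp interpretation
  over the same domain. Conversely every classical interpretation is a \<open>V\<close>-interpretation,
  as \<open>{0,1} \<subseteq> V\<close>.\<close>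

definition crisp :: "(nat \<Rightarrow> 'u list \<Rightarrow> real) \<Rightarrow> nat \<Rightarrow> 'u list \<Rightarrow> real" where
  "crisp P p xs = (if 0 < P p xs then 1 else 0)"

lemma is_interp_crisp: "is_interp V U F P \<Longrightarrow> is_interp {0, 1} U F (crisp P)"
  unfolding is_interp_def crisp_def by auto

lemma is_interp_nonempty: "is_interp V U F P \<Longrightarrow> U \<noteq> {}"
  unfolding is_interp_def by blast

lemma is_interp_mono: "is_interp V U F P \<Longrightarrow> V \<subseteq> V' \<Longrightarrow> is_interp V' U F P"
  unfolding is_interp_def by blast

lemma teval_in_domain:
  assumes "is_interp V U F P" and "\<forall>n. e n \<in> U"
  shows "teval F e t \<in> U"
proof (induction t)
  case (Fn f ts)
  then have "set (map (teval F e) ts) \<subseteq> U" by auto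
  with assms(1) show ?case unfolding is_interp_def by simp
qed (use assms(2) in simp)

lemma Inf_Sup_in_unit_interval:
  fixes S :: "real set"
  assumes "S \<noteq> {}" and "S \<subseteq> {0..1}"
  shows "Inf S \<in> {0..1}" and "Sup S \<in> {0..1}"
proof -
  obtain x where x: "x \<in> S" using assms(1) by blast
  have "bdd_below S" "bdd_above S"
    using assms(2) by (auto intro: bdd_below_mono bdd_above_mono)
  then have "Inf S \<le> x" "x \<le> Sup S"
    using x by (auto intro: cInf_lower cSup_upper)
  moreover have "0 \<le> Inf S" "Sup S \<le> 1"
    using assms by (auto intro!: cInf_greatest cSup_least)
  ultimately show "Inf S \<in> {0..1}" "Sup S \<in> {0..1}"
    using x assms(2) by auto
qed

lemma feval_in_unit_interval:
  assumes "is_interp V U F P" and "V \<subseteq> {0..1}" and "\<forall>n. e n \<in> U"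
  shows "feval U F P e \<phi> \<in> {0..1}"
  using assms(3)
proof (induction \<phi> arbitrary: e)
  case (Atom p ts)
  have "set (map (teval F e) ts) \<subseteq> U"
    using teval_in_domain[OF assms(1) Atom] by auto
  then have "P p (map (teval F e) ts) \<in> V"
    using assms(1) unfolding is_interp_def by blast
  with assms(2) show ?case by auto
next
  case (All x a)
  have "U \<noteq> {}" using is_interp_nonempty[OF assms(1)] .
  moreover have "(\<lambda>u. feval U F P (e(x := u)) a) ` U \<subseteq> {0..1}"
    using All by (simp add: image_subset_iff)
  ultimately have "Inf ((\<lambda>u. feval U F P (e(x := u)) a) ` U) \<in> {0..1}"
    by (intro Inf_Sup_in_unit_interval(1)) auto
  then show ?case by simp
next
  case (Ex x a)
  have "U \<noteq> {}" using is_interp_nonempty[OF assms(1)] .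
  moreover have "(\<lambda>u. feval U F P (e(x := u)) a) ` U \<subseteq> {0..1}"
    using Ex by (simp add: image_subset_iff)
  ultimately have "Sup ((\<lambda>u. feval U F P (e(x := u)) a) ` U) \<in> {0..1}"
    by (intro Inf_Sup_in_unit_interval(2)) auto
  then show ?case by simp
qed (fastforce simp: min_le_iff_disj le_max_iff_disj)+

lemma feval_crisp_qfree:
  assumes "is_interp V U F P" and "V \<subseteq> {0..1}" and "\<forall>n. e n \<in> U"
    and "qfree \<phi>"
  shows "feval U F (crisp P) e \<phi> = (if 0 < feval U F P e \<phi> then 1 else 0)"
  using assms(4)
proof (induction \<phi>)
  case (Imp a b)
  have "0 \<le> feval U F P e b"
    using feval_in_unit_interval[OF assms(1-3)] by simp
  with Imp show ?case by auto
qed (auto simp: crisp_def)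

lemma feval_crisp_prenex:
  assumes "is_interp V U F P" and "V \<subseteq> {0..1}" and "\<forall>n. e n \<in> U"
    and "prenex \<phi>" and "0 < feval U F P e \<phi>"
  shows "feval U F (crisp P) e \<phi> = 1"
  using assms(3-5)
proof (induction \<phi> arbitrary: e rule: prenex.induct)
  case (1 x a)
  let ?S = "(\<lambda>u. feval U F P (e(x := u)) a) ` U"
  have "U \<noteq> {}" using is_interp_nonempty[OF assms(1)] .
  have "bdd_below ?S"
    using feval_in_unit_interval[OF assms(1,2)] 1(2) by (auto intro!: bdd_belowI[of _ 0])
  then have "0 < feval U F P (e(x := u)) a" if "u \<in> U" for u
    using 1(4) cInf_lower[of _ ?S] that by (fastforce intro: less_le_trans)
  with 1 have "(\<lambda>u. feval U F (crisp P) (e(x := u)) a) ` U = {1}"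
    using \<open>U \<noteq> {}\<close> by auto
  then show ?case by simp
next
  case (2 x a)
  let ?S = "(\<lambda>u. feval U F P (e(x := u)) a) ` U"
  have "U \<noteq> {}" using is_interp_nonempty[OF assms(1)] .
  moreover have "bdd_above ?S"
    using feval_in_unit_interval[OF assms(1,2)] 2(2) by (auto intro!: bdd_aboveI[of _ 1])
  ultimately obtain u where u: "u \<in> U" "0 < feval U F P (e(x := u)) a"
    using 2(4) by (auto simp: less_cSup_iff)
  with 2 have "feval U F (crisp P) (e(x := u)) a = 1" by simp
  moreover have "feval U F (crisp P) (e(x := v)) a \<le> 1" if "v \<in> U" for v
    using feval_in_unit_interval[OF is_interp_crisp[OF assms(1)]] 2(2) that by simp
  ultimately show ?case
    using u(1) by (auto intro!: cSup_eq_maximum)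
qed (subst feval_crisp_qfree[OF assms(1,2)]; simp)+

lemma one_sat_imp_classical_sat:
  assumes "V \<subseteq> {0..1}" and "prenex \<phi>" and "one_sat TYPE('u) V \<phi>"
  shows "classical_sat TYPE('u) \<phi>"
proof -
  obtain U :: "'u set" and F P e where
    I: "is_interp V U F P" and e: "\<forall>n. e n \<in> U" and one: "feval U F P e \<phi> = 1"
    using assms(3) unfolding one_sat_def by blast
  have "feval U F (crisp P) e \<phi> = 1"
    using feval_crisp_prenex[OF I assms(1) e assms(2)] one by simp
  with is_interp_crisp[OF I] e show ?thesis
    unfolding classical_sat_def one_sat_def by blast
qed

lemma classical_sat_imp_one_sat:
  assumes "{0, 1} \<subseteq> V" and "classical_sat TYPE('u) \<phi>"
  shows "one_sat TYPE('u) V \<phi>"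
  using assms is_interp_mono unfolding classical_sat_def one_sat_def by blast

lemma one_sat_iff_classical_sat:
  assumes "goedel_set V" and "prenex \<phi>"
  shows "one_sat TYPE('u) V \<phi> \<longleftrightarrow> classical_sat TYPE('u) \<phi>"
  using assms one_sat_imp_classical_sat classical_sat_imp_one_sat
  unfolding goedel_set_def by blast

text \<open>The crisp model lives on the same domain.\<close>

theorem mainTheorem5:
  fixes C :: "fm set"
  assumes "prenex_class C"
    and "infinite (UNIV :: 'u set)"
  shows "(\<forall>V. goedel_set V \<longrightarrow>
            (\<forall>\<phi>\<in>C. one_sat TYPE('u) V \<phi> \<longleftrightarrow> classical_sat TYPE('u) \<phi>))
       \<and> (\<forall>V V'. goedel_set V \<longrightarrow> goedel_set V' \<longrightarrow>
            (\<forall>\<phi>\<in>C. one_sat TYPE('u) V \<phi> \<longleftrightarrow> one_sat TYPE('u) V' \<phi>))"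
proof -
  have "\<forall>\<phi>\<in>C. prenex \<phi>"
    using assms(1) unfolding prenex_class_def by auto
  then show ?thesis
    using one_sat_iff_classical_sat by blast
qed

end
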